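(* Let $N\ge 1$, let $s_1,\dots,s_N>0$ and $u_1,\dots,u_N>0$ with the nodes indexed so that $u_1\le u_2\le\dots\le u_N$, let $H_1,\dots,H_N\ge 0$ be integers and $\mathcal{E}>0$. For slot length $\sigma>0$ and transmit probability $\tau\in(0,1)$ define $p_s=\tau(1-\tau)^{N-1}$, $\bar t_i=(1-\tau)^N\sigma$, $\bar t_s=\sum_{k=1}^N p_s(s_k+\sigma)$, $$\bar t_c=\sum_{k=2}^N \tau(1-\tau)^{N-k}\sum_{l=1}^{k-1}\binom{k-1}{l}\tau^l(1-\tau)^{k-1-l}(u_k+\sigma),$$ and the CSMA throughput per node and bit-cost of node $k$ $$\mathsf{S}=\frac{p_s}{\bar t_s+\bar t_c+\bar t_i},\qquad \mathsf{B}_k=\Bigl(H_k+\frac{\tau}{p_s}\Bigr)u_k\mathcal{E}.$$ If $\tau=c\sqrt{\sigma}$ for a fixed constant $c>0$, then $$\lim_{\sigma\to 0}\mathsf{S}=\frac{1}{\sum_{k=1}^N s_k}\quad\text{and}\quad \lim_{\sigma\to 0}\mathsf{B}_k=(H_k+1)u_k\mathcal{E}\ \text{ for every } k.$$ That is, CSMA based CoopMAC and Direct Link asymptotically attain the throughput and bit-cost of the corresponding Round Robin schemes.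
   Context: Interpretation (for CSMA based Direct Link and CoopMAC with $N$ saturated nodes sending 1-bit packets to an access point, all at transmit power $\mathcal{E}$): $s_k$ is the travel time of a packet of node $k$ ($1/R_k$ for direct transmission at rate $R_k$, or $1/R_{kh_k}+1/R_{h_k}$ if $k$ transmits via a helper $h_k$), $u_k$ is the duration of node $k$'s own transmission ($1/R_k$ or $1/R_{kh_k}$), and $H_k$ is the number of nodes that node $k$ helps (all $H_k=0$ in Direct Link). The Round Robin values are throughput $1/\sum_k s_k$ per node and bit-cost $(H_k+1)u_k\mathcal{E}$; $\sigma$ is a slot length normalized by packet size, so $\sigma\to0$ corresponds to packet lengths tending to infinity. *)

theory Defs
  imports "HOL-Analysis.Analysis"
begin

definition p_s :: "nat \<Rightarrow> real \<Rightarrow> real" where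
  "p_s N tau = tau * (1 - tau) ^ (N - 1)"

definition t_idle :: "nat \<Rightarrow> real \<Rightarrow> real \<Rightarrow> real" where
  "t_idle N sl tau = (1 - tau) ^ N * sl"

definition t_succ :: "nat \<Rightarrow> (nat \<Rightarrow> real) \<Rightarrow> real \<Rightarrow> real \<Rightarrow> real" where
  "t_succ N s sl tau = (\<Sum>k=1..N. p_s N tau * (s k + sl))"

definition t_coll :: "nat \<Rightarrow> (nat \<Rightarrow> real) \<Rightarrow> real \<Rightarrow> real \<Rightarrow> real" where
  "t_coll N u sl tau =
     (\<Sum>k=2..N. tau * (1 - tau) ^ (N - k) *
        (\<Sum>l=1..k-1. real ((k - 1) choose l) * tau ^ l * (1 - tau) ^ (k - 1 - l)) * (u k + sl))"

definition csma_S :: "nat \<Rightarrow> (nat \<Rightarrow> real) \<Rightarrow> (nat \<Rightarrow> real) \<Rightarrow> real \<Rightarrow> real \<Rightarrow> real" where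
  "csma_S N s u sl tau =
     p_s N tau / (t_succ N s sl tau + t_coll N u sl tau + t_idle N sl tau)"

definition csma_B :: "nat \<Rightarrow> nat \<Rightarrow> real \<Rightarrow> real \<Rightarrow> real \<Rightarrow> real" where
  "csma_B N H uk E tau = (real H + tau / p_s N tau) * uk * E"

end

theory Submission
  imports Defs
begin

text \<open>Divide numerator and denominator of the throughput by \<open>\<tau>\<close>. Then \<open>p\<^sub>s/\<tau> = (1-\<tau>)^(N-1) \<rightarrow> 1\<close>,
  the success term tends to \<open>\<Sum> s\<^sub>k\<close>, every collision term carries a factor \<open>\<tau>\<^sup>l\<close> with \<open>l \<ge> 1\<close> and
  vanishes, and the idle term is \<open>(1-\<tau>)\<^sup>N \<sigma>/\<tau>\<close>, which vanishes as soon as \<open>\<sigma> = o(\<tau>)\<close>. The choice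
  \<open>\<tau> = c\<surd>\<sigma>\<close> makes \<open>\<tau> \<rightarrow> 0\<close> and \<open>\<sigma>/\<tau> = \<surd>\<sigma>/c \<rightarrow> 0\<close> at the same time. The bit-cost only involves
  \<open>\<tau>/p\<^sub>s\<close>, which tends to \<open>1\<close>.\<close>

lemma p_s_div_tau: "tau \<noteq> 0 \<Longrightarrow> p_s N tau / tau = (1 - tau) ^ (N - 1)"
  by (simp add: p_s_def)

lemma t_succ_eq: "t_succ N s sl tau = p_s N tau * (\<Sum>k=1..N. s k + sl)"
  by (simp add: t_succ_def sum_distrib_left)

lemma t_coll_eq:
  "t_coll N u sl tau = tau * (\<Sum>k=2..N. (1 - tau) ^ (N - k) *
     (\<Sum>l=1..k-1. real ((k - 1) choose l) * tau ^ l * (1 - tau) ^ (k - 1 - l)) * (u k + sl))"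
  unfolding t_coll_def by (subst sum_distrib_left) (rule sum.cong, simp_all add: ac_simps)

lemma p_s_div_tau_tendsto:
  assumes "(tau \<longlongrightarrow> 0) F" and "eventually (\<lambda>x. tau x \<noteq> 0) F"
  shows "((\<lambda>x. p_s N (tau x) / tau x) \<longlongrightarrow> 1) F"
proof -
  have "((\<lambda>x. (1 - tau x) ^ (N - 1)) \<longlongrightarrow> 1) F"
    using tendsto_power[OF tendsto_diff[OF tendsto_const assms(1)], of 1 "N - 1"] by simp
  moreover have "eventually (\<lambda>x. (1 - tau x) ^ (N - 1) = p_s N (tau x) / tau x) F"
    by (rule eventually_mono[OF assms(2)]) (simp add: p_s_div_tau)
  ultimately show ?thesis
    by (rule Lim_transform_eventually)
qed

lemma t_succ_div_tau_tendsto: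
  assumes "(tau \<longlongrightarrow> 0) F" and "eventually (\<lambda>x. tau x \<noteq> 0) F" and "(sl \<longlongrightarrow> 0) F"
  shows "((\<lambda>x. t_succ N s (sl x) (tau x) / tau x) \<longlongrightarrow> (\<Sum>k=1..N. s k)) F"
proof -
  have "((\<lambda>x. p_s N (tau x) / tau x * (\<Sum>k=1..N. s k + sl x)) \<longlongrightarrow> 1 * (\<Sum>k=1..N. s k + 0)) F"
    by (intro tendsto_intros p_s_div_tau_tendsto assms)
  then show ?thesis by (simp add: t_succ_eq)
qed

lemma t_coll_div_tau_tendsto:
  assumes "(tau \<longlongrightarrow> 0) F" and "eventually (\<lambda>x. tau x \<noteq> 0) F" and "(sl \<longlongrightarrow> 0) F"
  shows "((\<lambda>x. t_coll N u (sl x) (tau x) / tau x) \<longlongrightarrow> 0) F"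
proof -
  define G where "G x = (\<Sum>k=2..N. (1 - tau x) ^ (N - k) *
     (\<Sum>l=1..k-1. real ((k - 1) choose l) * tau x ^ l * (1 - tau x) ^ (k - 1 - l)) * (u k + sl x))"
    for x
  have "(G \<longlongrightarrow> (\<Sum>k=2..N. (1 - 0) ^ (N - k) *
     (\<Sum>l=1..k-1. real ((k - 1) choose l) * 0 ^ l * (1 - 0) ^ (k - 1 - l)) * (u k + 0))) F"
    unfolding G_def by (intro tendsto_intros assms)
  moreover have "(\<Sum>k=2..N. (1 - 0) ^ (N - k) *
     (\<Sum>l=1..k-1. real ((k - 1) choose l) * 0 ^ l * (1 - 0) ^ (k - 1 - l)) * (u k + 0)) = (0::real)"
    by (intro sum.neutral ballI) (auto intro!: sum.neutral)
  ultimately have "(G \<longlongrightarrow> 0) F"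
    by simp
  moreover have "eventually (\<lambda>x. G x = t_coll N u (sl x) (tau x) / tau x) F"
    by (rule eventually_mono[OF assms(2)]) (simp add: G_def t_coll_eq)
  ultimately show ?thesis
    by (rule Lim_transform_eventually)
qed

lemma t_idle_div_tau_tendsto:
  assumes "(tau \<longlongrightarrow> 0) F" and "((\<lambda>x. sl x / tau x) \<longlongrightarrow> 0) F"
  shows "((\<lambda>x. t_idle N (sl x) (tau x) / tau x) \<longlongrightarrow> 0) F"
proof -
  have "((\<lambda>x. (1 - tau x) ^ N * (sl x / tau x)) \<longlongrightarrow> (1 - 0) ^ N * 0) F"
    by (intro tendsto_intros assms)
  then show ?thesis by (simp add: t_idle_def)
qed

lemma csma_S_tendsto:
  assumes "(\<Sum>k=1..N. s k) \<noteq> 0"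
    and "(tau \<longlongrightarrow> 0) F" and "eventually (\<lambda>x. tau x \<noteq> 0) F"
    and "(sl \<longlongrightarrow> 0) F" and "((\<lambda>x. sl x / tau x) \<longlongrightarrow> 0) F"
  shows "((\<lambda>x. csma_S N s u (sl x) (tau x)) \<longlongrightarrow> 1 / (\<Sum>k=1..N. s k)) F"
proof -
  have "((\<lambda>x. (p_s N (tau x) / tau x) /
            (t_succ N s (sl x) (tau x) / tau x + t_coll N u (sl x) (tau x) / tau x
             + t_idle N (sl x) (tau x) / tau x))
        \<longlongrightarrow> 1 / ((\<Sum>k=1..N. s k) + 0 + 0)) F"
    by (intro tendsto_intros p_s_div_tau_tendsto t_succ_div_tau_tendsto t_coll_div_tau_tendsto
        t_idle_div_tau_tendsto assms) (use assms(1) in simp)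
  then have "((\<lambda>x. (p_s N (tau x) / tau x) /
            (t_succ N s (sl x) (tau x) / tau x + t_coll N u (sl x) (tau x) / tau x
             + t_idle N (sl x) (tau x) / tau x))
        \<longlongrightarrow> 1 / (\<Sum>k=1..N. s k)) F"
    by simp
  moreover have "eventually (\<lambda>x. (p_s N (tau x) / tau x) /
            (t_succ N s (sl x) (tau x) / tau x + t_coll N u (sl x) (tau x) / tau x
             + t_idle N (sl x) (tau x) / tau x) = csma_S N s u (sl x) (tau x)) F"
    by (rule eventually_mono[OF assms(3)]) (simp add: csma_S_def add_divide_distrib[symmetric])
  ultimately show ?thesis
    by (rule Lim_transform_eventually)
qed

lemma csma_B_tendsto:
  assumes "(tau \<longlongrightarrow> 0) F" and "eventually (\<lambda>x. tau x \<noteq> 0) F"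
  shows "((\<lambda>x. csma_B N H uk E (tau x)) \<longlongrightarrow> (real H + 1) * uk * E) F"
proof -
  have "((\<lambda>x. (real H + 1 / (p_s N (tau x) / tau x)) * uk * E) \<longlongrightarrow> (real H + 1 / 1) * uk * E) F"
    by (intro tendsto_intros p_s_div_tau_tendsto assms) simp
  then show ?thesis by (simp add: csma_B_def)
qed

theorem proposition2:
  fixes N :: nat and s u :: "nat \<Rightarrow> real" and H :: "nat \<Rightarrow> nat" and E c :: real
  assumes "N \<ge> 1"
    and "\<And>k. k \<in> {1..N} \<Longrightarrow> s k > 0"
    and "\<And>k. k \<in> {1..N} \<Longrightarrow> u k > 0"
    and "\<And>i j. i \<in> {1..N} \<Longrightarrow> j \<in> {1..N} \<Longrightarrow> i \<le> j \<Longrightarrow> u i \<le> u j"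
    and "E > 0" and "c > 0"
  shows "((\<lambda>sl. csma_S N s u sl (c * sqrt sl))
            \<longlongrightarrow> 1 / (\<Sum>k=1..N. s k)) (at_right 0) \<and>
         (\<forall>k\<in>{1..N}. ((\<lambda>sl. csma_B N (H k) (u k) E (c * sqrt sl))
            \<longlongrightarrow> (real (H k) + 1) * u k * E) (at_right 0))"
proof -
  have sum_s_nonzero: "(\<Sum>k=1..N. s k) \<noteq> 0"
    using assms(1,2) sum_pos[of "{1..N}" s] by fastforce
  have sl_tendsto: "((\<lambda>sl. sl) \<longlongrightarrow> 0) (at_right (0::real))"
    by (rule tendsto_ident_at)
  have tau_tendsto: "((\<lambda>sl. c * sqrt sl) \<longlongrightarrow> 0) (at_right (0::real))"
    using tendsto_mult_left[OF tendsto_real_sqrt[OF sl_tendsto], of c] by simp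
  have tau_nonzero: "eventually (\<lambda>sl. c * sqrt sl \<noteq> 0) (at_right (0::real))"
    using eventually_at_right_less[of 0] by eventually_elim (use assms(6) in simp)
  have "((\<lambda>sl. sqrt sl / c) \<longlongrightarrow> 0) (at_right (0::real))"
    using tendsto_divide[OF tendsto_real_sqrt[OF sl_tendsto] tendsto_const, of c] assms(6) by simp
  moreover have "eventually (\<lambda>sl. sqrt sl / c = sl / (c * sqrt sl)) (at_right (0::real))"
    using eventually_at_right_less[of 0]
    by eventually_elim (simp add: real_div_sqrt mult.commute[of c] divide_divide_eq_left[symmetric])
  ultimately have sl_div_tau: "((\<lambda>sl. sl / (c * sqrt sl)) \<longlongrightarrow> 0) (at_right (0::real))"
    by (rule Lim_transform_eventually)
  show ?thesis
    using csma_S_tendsto[OF sum_s_nonzero tau_tendsto tau_nonzero sl_tendsto sl_div_tau]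
      csma_B_tendsto[OF tau_tendsto tau_nonzero]
    by blast
qed

end
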